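(* Let $P\in\mathfrak N^{Seg}_2$ with $h_P\ge2$ and $P(0)\cup P(1)$ of type $3C$. Then $P$ has a retract $R$ with $R(0)\cup R(1)$ a 4-crown if and only if $P(2\to h_P)$ has a retract $T$ whose set of minimal elements $T(0)$ is a 2-element antichain.
   Context: All posets are finite; $h_P$ is the height; level sets $P(0)=\min P$, $P(k+1)=\min(P\setminus\bigcup_{i\le k}P(i))$; $P(k\to\ell)=\bigcup_{i=k}^\ell P(i)$ as induced subposet. Level sets of a retract refer to its own levels. A retract is the image of an idempotent order-preserving self-map. A 4-crown is the ordinal sum of two 2-element antichains; type $3C$ means three disjoint 2-element chains with no further comparabilities; a 6-crown is $x_0<y_0>x_1<y_1>x_2<y_2>x_0$ with no other comparabilities. A section of width three is a poset $P$ of height $h_P\ge1$ with carrier $\{c_{k,j}:k\in[0,h_P],j\in\{0,1,2\}\}$ such that: $c_{0,j}<\dots<c_{h_P,j}$ for each $j$; each $\{c_{k,0},c_{k,1},c_{k,2}\}$ is an antichain; $c_{k,i}<c_{\ell,j}\Rightarrow c_{k,i+1}<c_{\ell,j+1}$ (indices mod 3); and for no $k$ is every point of $P(k)$ below every point of $P(k+1)$. It is nice if for all $x<y$: $\{z:z>x\}\not\subseteq\{z:z\ge y\}$ and $\{z:z<y\}\not\subseteq\{z:z\le x\}$. $\mathfrak N_2$ is the class of nice sections of width three of height $\ge2$ with horizon 2 (every point of $P(k)$ is below every point of $P(\ell)$ whenever $\ell\ge k+2$). $\mathfrak N^{Seg}_2=\{P(1\to h_P-1):P\in\mathfrak N_2\}$.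 *)

theory Defs
  imports Main
begin

text \<open>A finite poset is a carrier set A together with a strict order r; only pairs with
both components in the carrier are ever consulted, so (A, r) denotes the induced subposet
on A.\<close>

definition is_poset :: "'a set \<Rightarrow> 'a rel \<Rightarrow> bool" where
  "is_poset A r \<longleftrightarrow> finite A \<and> (\<forall>x\<in>A. (x, x) \<notin> r) \<and>
     (\<forall>x\<in>A. \<forall>y\<in>A. \<forall>z\<in>A. (x, y) \<in> r \<longrightarrow> (y, z) \<in> r \<longrightarrow> (x, z) \<in> r)"

definition minset :: "'a set \<Rightarrow> 'a rel \<Rightarrow> 'a set" where
  "minset A r = {x \<in> A. \<not> (\<exists>y\<in>A. (y, x) \<in> r)}"

fun rest :: "'a set \<Rightarrow> 'a rel \<Rightarrow> nat \<Rightarrow> 'a set" where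
  "rest A r 0 = A"
| "rest A r (Suc k) = rest A r k - minset (rest A r k) r"

definition level :: "'a set \<Rightarrow> 'a rel \<Rightarrow> nat \<Rightarrow> 'a set" where
  "level A r k = minset (rest A r k) r"

definition height :: "'a set \<Rightarrow> 'a rel \<Rightarrow> nat" where
  "height A r = Max {k. level A r k \<noteq> {}}"

text \<open>P(k -> l), the union of levels k..l (as induced subposet with the same r)\<close>
definition seg :: "'a set \<Rightarrow> 'a rel \<Rightarrow> nat \<Rightarrow> nat \<Rightarrow> 'a set" where
  "seg A r k l = (\<Union>i\<in>{k..l}. level A r i)"

definition iso :: "'a set \<Rightarrow> 'a rel \<Rightarrow> 'b set \<Rightarrow> 'b rel \<Rightarrow> bool" where
  "iso A r B s \<longleftrightarrow> (\<exists>f. bij_betw f A B \<and>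
     (\<forall>x\<in>A. \<forall>y\<in>A. (x, y) \<in> r \<longleftrightarrow> (f x, f y) \<in> s))"

definition is_retract :: "'a set \<Rightarrow> 'a rel \<Rightarrow> 'a set \<Rightarrow> bool" where
  "is_retract A r R \<longleftrightarrow> (\<exists>f. (\<forall>x\<in>A. f x \<in> A) \<and> f ` A = R \<and>
     (\<forall>x\<in>A. f (f x) = f x) \<and>
     (\<forall>x\<in>A. \<forall>y\<in>A. (x, y) \<in> r \<longrightarrow> f x = f y \<or> (f x, f y) \<in> r))"

text \<open>Model posets: three disjoint 2-chains (type 3C) and the 4-crown.\<close>
definition C3_carrier :: "nat set" where "C3_carrier = {0..5}"
definition C3_rel :: "nat rel" where "C3_rel = {(0,1), (2,3), (4,5)}"
definition crown4_carrier :: "nat set" where "crown4_carrier = {0..3}"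
definition crown4_rel :: "nat rel" where "crown4_rel = {(0,2), (0,3), (1,2), (1,3)}"

definition section3 :: "'a set \<Rightarrow> 'a rel \<Rightarrow> bool" where
  "section3 A r \<longleftrightarrow> is_poset A r \<and> height A r \<ge> 1 \<and>
    (\<exists>c :: nat \<Rightarrow> nat \<Rightarrow> 'a.
       bij_betw (\<lambda>(k, j). c k j) ({0..height A r} \<times> {0..<3}) A \<and>
       (\<forall>j<3. \<forall>k<height A r. (c k j, c (Suc k) j) \<in> r) \<and>
       (\<forall>k\<le>height A r. \<forall>i<3. \<forall>j<3. (c k i, c k j) \<notin> r) \<and>
       (\<forall>k\<le>height A r. \<forall>l\<le>height A r. \<forall>i<3. \<forall>j<3.
          (c k i, c l j) \<in> r \<longrightarrow> (c k ((i + 1) mod 3), c l ((j + 1) mod 3)) \<in> r)) \<and>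
    (\<forall>k<height A r. \<not> (\<forall>x\<in>level A r k. \<forall>y\<in>level A r (Suc k). (x, y) \<in> r))"

definition nice :: "'a set \<Rightarrow> 'a rel \<Rightarrow> bool" where
  "nice A r \<longleftrightarrow> (\<forall>x\<in>A. \<forall>y\<in>A. (x, y) \<in> r \<longrightarrow>
     \<not> ({z\<in>A. (x, z) \<in> r} \<subseteq> {z\<in>A. z = y \<or> (y, z) \<in> r}) \<and>
     \<not> ({z\<in>A. (z, y) \<in> r} \<subseteq> {z\<in>A. z = x \<or> (z, x) \<in> r}))"

definition horizon2 :: "'a set \<Rightarrow> 'a rel \<Rightarrow> bool" where
  "horizon2 A r \<longleftrightarrow> (\<forall>k l. k + 2 \<le> l \<longrightarrow>
     (\<forall>x\<in>level A r k. \<forall>y\<in>level A r l. (x, y) \<in> r))"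

definition N2 :: "'a set \<Rightarrow> 'a rel \<Rightarrow> bool" where
  "N2 A r \<longleftrightarrow> section3 A r \<and> nice A r \<and> height A r \<ge> 2 \<and> horizon2 A r"

text \<open>Membership in N_2^Seg, up to isomorphism (representatives of N_2 taken on nat,
which is no restriction since every finite poset has an isomorphic copy on nat).\<close>
definition NSeg2 :: "'a set \<Rightarrow> 'a rel \<Rightarrow> bool" where
  "NSeg2 A r \<longleftrightarrow> (\<exists>(B :: nat set) s. N2 B s \<and> iso A r (seg B s 1 (height B s - 1)) s)"

end

theory Submission
  imports Defs
begin

text \<open>
  Write U = P(2 \<rightarrow> h). As P is a segment of a poset of horizon 2, every minimal point of P
  lies below every point of U, and U is an up-set whose complement is P(0 \<rightarrow> 1).

  Let f retract P onto R with R(0) \<union> R(1) a 4-crown {p, q} < {s, t}. A point x of U lies above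
  all minimal points of P, so f x is neither p nor q, hence f x lies above s or t. In a bottom of
  type 3C every point of level 1 has only one point below it, so s and t, which lie above both p
  and q, belong to U; as U is an up-set, f maps U into itself, and f(U) is a retract of U whose
  minimal points form the antichain {s, t}.

  Conversely, the three chains of P(0 \<rightarrow> 1) retract onto two minimal points \<alpha>, \<beta>. Gluing this with
  a retraction of U onto T gives a retract {\<alpha>, \<beta>} \<union> T of P whose two bottom levels are
  {\<alpha>, \<beta>} < T(0), a 4-crown when T(0) is a 2-element antichain.
\<close>

section \<open>Levels of a finite poset\<close>

lemma minset_subset: "minset A r \<subseteq> A"
  by (auto simp: minset_def)

lemma rest_subset: "rest A r k \<subseteq> A"
  by (induction k) auto

lemma rest_antimono: "j \<le> k \<Longrightarrow> rest A r k \<subseteq> rest A r j"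
  by (rule lift_Suc_antimono_le[of "rest A r"]) auto

lemma level_subset_rest: "level A r k \<subseteq> rest A r k"
  by (auto simp: level_def minset_def)

lemma level_subset: "level A r k \<subseteq> A"
  using level_subset_rest rest_subset by fast

lemma level_0: "level A r 0 = minset A r"
  by (simp add: level_def)

lemma rest_Suc_eq: "rest A r (Suc k) = rest A r k - level A r k"
  by (simp add: level_def)

lemma rest_up_closed: "x \<in> rest A r k \<Longrightarrow> y \<in> A \<Longrightarrow> (x, y) \<in> r \<Longrightarrow> y \<in> rest A r k"
  by (induction k) (auto simp: minset_def)

lemma rest_rest: "rest (rest A r j) r k = rest A r (j + k)"
  by (induction k) auto

lemma is_posetD:
  assumes "is_poset A r"
  shows "finite A" "x \<in> A \<Longrightarrow> (x, x) \<notin> r"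
    "x \<in> A \<Longrightarrow> y \<in> A \<Longrightarrow> z \<in> A \<Longrightarrow> (x, y) \<in> r \<Longrightarrow> (y, z) \<in> r \<Longrightarrow> (x, z) \<in> r"
  using assms unfolding is_poset_def by blast+

lemma is_poset_subset: "is_poset A r \<Longrightarrow> B \<subseteq> A \<Longrightarrow> is_poset B r"
  unfolding is_poset_def by (meson finite_subset subsetD)

lemma minset_ex_below:
  assumes "is_poset A r" "y \<in> A"
  shows "\<exists>m\<in>minset A r. m = y \<or> (m, y) \<in> r"
proof -
  let ?r = "r \<inter> A \<times> A" and ?Q = "{z \<in> A. z = y \<or> (z, y) \<in> r}"
  have "trans ?r" "irrefl ?r" "finite ?r"
    using is_posetD[OF assms(1)] unfolding trans_def irrefl_def by auto
  then have "wf ?r"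
    by (simp add: wf_iff_acyclic_if_finite acyclic_irrefl trancl_id)
  then obtain m where m: "m \<in> ?Q" and min: "\<And>z. (z, m) \<in> ?r \<Longrightarrow> z \<notin> ?Q"
    using wfE_min[of ?r y ?Q] assms(2) by auto
  have "(z, m) \<notin> r" if "z \<in> A" for z
  proof
    assume "(z, m) \<in> r"
    moreover from this have "z \<in> ?Q"
      using m that assms(2) is_posetD(3)[OF assms(1), of z m y] by auto
    ultimately show False
      using min m that by auto
  qed
  with m show ?thesis
    unfolding minset_def by auto
qed

lemma minset_eq_if_antichain_below:
  assumes "is_poset A r" "T \<subseteq> A" "M \<subseteq> T" "\<forall>x\<in>M. \<forall>y\<in>M. (x, y) \<notin> r"
    and "\<And>y. y \<in> T \<Longrightarrow> \<exists>m\<in>M. m = y \<or> (m, y) \<in> r"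
  shows "minset T r = M"
proof
  show "minset T r \<subseteq> M"
  proof
    fix y assume y: "y \<in> minset T r"
    then obtain m where "m \<in> M" "m = y \<or> (m, y) \<in> r"
      using assms(5) minset_subset[of T r] by blast
    with y assms(3) show "y \<in> M"
      unfolding minset_def by blast
  qed
  show "M \<subseteq> minset T r"
  proof
    fix x assume x: "x \<in> M"
    have "(y, x) \<notin> r" if y: "y \<in> T" for y
    proof
      assume yx: "(y, x) \<in> r"
      obtain m where m: "m \<in> M" "m = y \<or> (m, y) \<in> r"
        using assms(5)[OF y] by blast
      then have "(m, x) \<in> r"
        using yx is_posetD(3)[OF assms(1), of m y x] x y assms(2,3) by blast
      with m(1) x assms(4) show False
        by blast
    qed
    with x assms(3) show "x \<in> minset T r"
      unfolding minset_def by blast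
  qed
qed

lemma level_nonempty_if_rest_nonempty:
  assumes "is_poset A r" "x \<in> rest A r k"
  shows "level A r k \<noteq> {}"
  using minset_ex_below[OF is_poset_subset[OF assms(1) rest_subset] assms(2)]
  unfolding level_def by blast

lemma less_card_if_rest_nonempty:
  assumes "is_poset A r" "rest A r k \<noteq> {}"
  shows "k < card A"
proof -
  have fin: "finite (rest A r j)" for j
    using is_posetD(1)[OF assms(1)] rest_subset finite_subset by metis
  have "card (rest A r k) + k \<le> card A"
    using assms(2)
  proof (induction k)
    case (Suc k)
    then obtain x where "x \<in> rest A r k"
      using rest_antimono[of k "Suc k" A r] by auto
    then have "level A r k \<noteq> {}"
      by (rule level_nonempty_if_rest_nonempty[OF assms(1)])
    then have "rest A r (Suc k) \<subset> rest A r k"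
      using level_subset_rest[of A r k] unfolding rest_Suc_eq by blast
    then have "card (rest A r (Suc k)) < card (rest A r k)"
      by (rule psubset_card_mono[OF fin])
    moreover have "card (rest A r k) + k \<le> card A"
      using Suc.IH \<open>x \<in> rest A r k\<close> by blast
    ultimately show ?case
      by linarith
  qed simp
  moreover have "card (rest A r k) > 0"
    using fin assms(2) by (simp add: card_gt_0_iff)
  ultimately show ?thesis by linarith
qed

lemma level_le_height:
  assumes "is_poset A r" "level A r k \<noteq> {}"
  shows "k \<le> height A r"
proof -
  have "{k. level A r k \<noteq> {}} \<subseteq> {..<card A}"
  proof
    fix j assume "j \<in> {k. level A r k \<noteq> {}}"
    then have "rest A r j \<noteq> {}"
      using level_subset_rest[of A r j] by auto
    then show "j \<in> {..<card A}"
      using less_card_if_rest_nonempty[OF assms(1)] by simp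
  qed
  then have "finite {k. level A r k \<noteq> {}}"
    using finite_subset by blast
  with assms(2) show ?thesis
    unfolding height_def by (simp add: Max_ge)
qed

lemma ex_level_if_mem_rest:
  assumes "is_poset A r" "x \<in> rest A r k"
  shows "\<exists>i\<ge>k. x \<in> level A r i"
proof -
  have "x \<notin> rest A r (k + card A)"
    using less_card_if_rest_nonempty[OF assms(1), of "k + card A"] by auto
  then obtain j where "j \<le> card A" "\<forall>i<j. x \<in> rest A r (k + i)" "x \<notin> rest A r (k + j)"
    using ex_least_nat_le[of "\<lambda>j. x \<notin> rest A r (k + j)"] assms(2) by auto
  moreover from this assms(2) obtain i where "j = Suc i"
    by (cases j) auto
  ultimately have "x \<in> level A r (k + i)"
    using rest_Suc_eq[of A r "k + i"] by auto
  then show ?thesis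
    using le_add1 by blast
qed

lemma seg_eq_rest_Diff:
  assumes "is_poset A r"
  shows "seg A r k l = rest A r k - rest A r (Suc l)"
proof
  show "seg A r k l \<subseteq> rest A r k - rest A r (Suc l)"
  proof
    fix x assume "x \<in> seg A r k l"
    then obtain i where i: "k \<le> i" "i \<le> l" "x \<in> level A r i"
      unfolding seg_def by auto
    then have "x \<in> rest A r k" "x \<notin> rest A r (Suc i)"
      using level_subset_rest[of A r i] rest_antimono[of k i A r] rest_Suc_eq[of A r i] by auto
    with i show "x \<in> rest A r k - rest A r (Suc l)"
      using rest_antimono[of "Suc i" "Suc l" A r] by auto
  qed
  show "rest A r k - rest A r (Suc l) \<subseteq> seg A r k l"
  proof
    fix x assume x: "x \<in> rest A r k - rest A r (Suc l)"
    then obtain i where "k \<le> i" "x \<in> level A r i"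
      using ex_level_if_mem_rest[OF assms] by blast
    moreover have "i \<le> l"
    proof (rule ccontr)
      assume "\<not> i \<le> l"
      then have "x \<in> rest A r (Suc l)"
        using \<open>x \<in> level A r i\<close> level_subset_rest[of A r i] rest_antimono[of "Suc l" i A r]
        by auto
      with x show False by simp
    qed
    ultimately show "x \<in> seg A r k l"
      unfolding seg_def by auto
  qed
qed

lemma seg_height_eq_rest:
  assumes "is_poset A r"
  shows "seg A r k (height A r) = rest A r k"
proof -
  have "rest A r (Suc (height A r)) = {}"
    using ex_level_if_mem_rest[OF assms, of _ "Suc (height A r)"] level_le_height[OF assms]
    by (metis Suc_n_not_le_n empty_iff equals0I le_trans)
  then show ?thesis
    unfolding seg_eq_rest_Diff[OF assms] by blast
qed

lemma seg_0_1: "seg A r 0 1 = level A r 0 \<union> level A r 1"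
proof -
  have "{0..1::nat} = {0, 1}" by auto
  then show ?thesis
    unfolding seg_def by simp
qed

lemma rest_2_eq: "rest A r 2 = A - seg A r 0 1"
  unfolding seg_0_1 numeral_2_eq_2 rest_Suc_eq by auto

lemma level_1_below_in_level_0:
  assumes "x \<in> level A r 1" "y \<in> A" "(y, x) \<in> r"
  shows "y \<in> level A r 0"
proof (rule ccontr)
  assume "y \<notin> level A r 0"
  then have "y \<in> rest A r 1"
    using assms(2) by (simp add: level_def)
  with assms(1,3) show False
    unfolding level_def minset_def by blast
qed

lemma level_1_has_below:
  assumes "x \<in> level A r 1"
  shows "\<exists>y\<in>level A r 0. (y, x) \<in> r"
proof -
  have "x \<in> A - minset A r"
    using assms level_subset_rest[of A r 1] by auto
  then obtain y where "y \<in> A" "(y, x) \<in> r"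
    unfolding minset_def by blast
  then show ?thesis
    using level_1_below_in_level_0[OF assms] by blast
qed

lemma level_0_eq_minimal_in_seg_0_1:
  "level A r 0 = {x \<in> seg A r 0 1. \<forall>y\<in>seg A r 0 1. (y, x) \<notin> r}"
proof -
  have "x \<in> level A r 0" if "x \<in> level A r 1" "\<forall>y\<in>seg A r 0 1. (y, x) \<notin> r" for x
    using level_1_has_below[OF that(1)] that(2) unfolding seg_0_1 by blast
  moreover have "(y, x) \<notin> r" if "x \<in> level A r 0" "y \<in> seg A r 0 1" for x y
  proof -
    have "y \<in> A"
      using that(2) level_subset[of A r] unfolding seg_0_1 by blast
    with that(1) show ?thesis
      unfolding level_0 minset_def by blast
  qed
  ultimately show ?thesis
    unfolding seg_0_1 by blast
qed

lemma level_1_eq_nonminimal_in_seg_0_1: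
  "level A r 1 = {x \<in> seg A r 0 1. \<exists>y\<in>seg A r 0 1. (y, x) \<in> r}"
proof -
  have "\<exists>y\<in>seg A r 0 1. (y, x) \<in> r" if "x \<in> level A r 1" for x
    using level_1_has_below[OF that] unfolding seg_0_1 by blast
  moreover have "x \<notin> level A r 0" if "y \<in> seg A r 0 1" "(y, x) \<in> r" for x y
    using that level_0_eq_minimal_in_seg_0_1[of A r] by blast
  ultimately show ?thesis
    unfolding seg_0_1 by blast
qed

lemma minset_Diff_up_closed:
  assumes "Y \<subseteq> A" "\<And>x y. x \<in> D \<Longrightarrow> y \<in> A \<Longrightarrow> (x, y) \<in> r \<Longrightarrow> y \<in> D"
  shows "minset (Y - D) r = minset Y r - D"
  using assms unfolding minset_def by blast

lemma rest_Diff_up_closed: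
  assumes "\<And>x y. x \<in> D \<Longrightarrow> y \<in> A \<Longrightarrow> (x, y) \<in> r \<Longrightarrow> y \<in> D"
  shows "rest (A - D) r k = rest A r k - D"
proof (induction k)
  case (Suc k)
  then show ?case
    using minset_Diff_up_closed[OF rest_subset[of A r k] assms] by auto
qed simp

section \<open>Isomorphisms\<close>

lemma iso_imp_rel_image:
  assumes "iso A r B s"
  shows "\<exists>g. inj_on g B \<and> A = g ` B \<and> r \<inter> A \<times> A = map_prod g g ` (s \<inter> B \<times> B)"
proof -
  obtain f where f: "bij_betw f A B" and rel: "\<forall>x\<in>A. \<forall>y\<in>A. (x, y) \<in> r \<longleftrightarrow> (f x, f y) \<in> s"
    using assms unfolding iso_def by blast
  define g where "g = inv_into A f"
  have g: "bij_betw g B A"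
    unfolding g_def using f by (rule bij_betw_inv_into)
  have fg: "f (g y) = y" if "y \<in> B" for y
    unfolding g_def using f that by (rule bij_betw_inv_into_right)
  have gf: "g (f x) = x" if "x \<in> A" for x
    unfolding g_def using f that by (rule bij_betw_inv_into_left)
  have "r \<inter> A \<times> A = map_prod g g ` (s \<inter> B \<times> B)"
  proof (intro set_eqI iffI)
    fix z assume "z \<in> r \<inter> A \<times> A"
    then obtain x y where xy: "z = (x, y)" "x \<in> A" "y \<in> A" "(x, y) \<in> r" by blast
    then have "(f x, f y) \<in> s \<inter> B \<times> B"
      using f rel bij_betwE by blast
    moreover have "z = map_prod g g (f x, f y)"
      using xy gf by simp
    ultimately show "z \<in> map_prod g g ` (s \<inter> B \<times> B)"
      by (rule rev_image_eqI)
  next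
    fix z assume "z \<in> map_prod g g ` (s \<inter> B \<times> B)"
    then obtain x y where "z = (g x, g y)" "x \<in> B" "y \<in> B" "(x, y) \<in> s" by auto
    with g rel fg show "z \<in> r \<inter> A \<times> A"
      by (auto simp: bij_betw_def)
  qed
  with g show ?thesis
    unfolding bij_betw_def by blast
qed

lemma iso_if_rel_image:
  assumes g: "bij_betw g B A" and rel: "r \<inter> A \<times> A = map_prod g g ` (s \<inter> B \<times> B)"
  shows "iso A r B s"
proof -
  define f where "f = inv_into B g"
  have f: "bij_betw f A B"
    unfolding f_def using g by (rule bij_betw_inv_into)
  have gf: "g (f x) = x" if "x \<in> A" for x
    unfolding f_def using g that by (rule bij_betw_inv_into_right)
  have inj: "inj_on (map_prod g g) (B \<times> B)"
    using g by (simp add: bij_betw_def map_prod_inj_on)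
  have "(x, y) \<in> r \<longleftrightarrow> (f x, f y) \<in> s" if "x \<in> A" "y \<in> A" for x y
  proof -
    have fxy: "(f x, f y) \<in> B \<times> B"
      using f that by (auto simp: bij_betw_def)
    have "(x, y) \<in> r \<longleftrightarrow> map_prod g g (f x, f y) \<in> r \<inter> A \<times> A"
      using that gf by simp
    also have "\<dots> \<longleftrightarrow> (f x, f y) \<in> s \<inter> B \<times> B"
      unfolding rel by (rule inj_on_image_mem_iff[OF inj fxy Int_lower2])
    also have "\<dots> \<longleftrightarrow> (f x, f y) \<in> s"
      using fxy by simp
    finally show ?thesis .
  qed
  with f show ?thesis
    unfolding iso_def by blast
qed

lemma iso_iff_rel_image:
  "iso A r B s \<longleftrightarrow> (\<exists>g. inj_on g B \<and> A = g ` B \<and> r \<inter> A \<times> A = map_prod g g ` (s \<inter> B \<times> B))"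
  using iso_imp_rel_image iso_if_rel_image unfolding bij_betw_def by metis

lemma is_poset_if_iso:
  assumes "iso A r B s" "is_poset B s"
  shows "is_poset A r"
proof -
  obtain f where f: "bij_betw f A B"
    and rel: "\<And>x y. x \<in> A \<Longrightarrow> y \<in> A \<Longrightarrow> (x, y) \<in> r \<longleftrightarrow> (f x, f y) \<in> s"
    using assms(1) unfolding iso_def by blast
  have fB: "f x \<in> B" if "x \<in> A" for x
    using f that bij_betwE by blast
  show ?thesis
    unfolding is_poset_def
  proof (intro conjI ballI impI)
    show "finite A"
      using bij_betw_finite[OF f] is_posetD(1)[OF assms(2)] by simp
    show "(x, x) \<notin> r" if "x \<in> A" for x
      using rel[OF that that] is_posetD(2)[OF assms(2) fB[OF that]] by simp
    show "(x, z) \<in> r" if "x \<in> A" "y \<in> A" "z \<in> A" "(x, y) \<in> r" "(y, z) \<in> r" for x y z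
      using that rel is_posetD(3)[OF assms(2) fB fB fB, of x y z] by simp
  qed
qed

lemma minset_image:
  assumes "Y \<subseteq> A" "\<And>x y. x \<in> A \<Longrightarrow> y \<in> A \<Longrightarrow> (x, y) \<in> r \<longleftrightarrow> (f x, f y) \<in> s"
  shows "f ` minset Y r = minset (f ` Y) s"
proof -
  have "(y, x) \<in> r \<longleftrightarrow> (f y, f x) \<in> s" if "x \<in> Y" "y \<in> Y" for x y
    using assms that by blast
  then show ?thesis
    unfolding minset_def by blast
qed

lemma rest_image:
  assumes "bij_betw f A B" "\<And>x y. x \<in> A \<Longrightarrow> y \<in> A \<Longrightarrow> (x, y) \<in> r \<longleftrightarrow> (f x, f y) \<in> s"
  shows "f ` rest A r k = rest B s k"
proof (induction k)
  case 0
  show ?case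
    using assms(1) by (simp add: bij_betw_def)
next
  case (Suc k)
  have inj: "inj_on f A"
    using assms(1) by (simp add: bij_betw_def)
  have "rest A r k - minset (rest A r k) r \<subseteq> A" "minset (rest A r k) r \<subseteq> A"
    using rest_subset[of A r k] minset_subset[of "rest A r k" r] by blast+
  then have "f ` rest A r (Suc k) = f ` rest A r k - f ` minset (rest A r k) r"
    using inj_on_image_set_diff[OF inj] by simp
  also have "\<dots> = rest B s (Suc k)"
    using minset_image[OF rest_subset assms(2)] Suc.IH by simp
  finally show ?case .
qed

lemma iso_crown4_iff:
  "iso X r crown4_carrier crown4_rel \<longleftrightarrow>
    (\<exists>p q s t. distinct [p, q, s, t] \<and> X = {p, q, s, t} \<and>
       r \<inter> X \<times> X = {(p, s), (p, t), (q, s), (q, t)})"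
proof -
  have carrier: "crown4_carrier = set [0, 1, 2, 3]"
    unfolding crown4_carrier_def by auto
  have rel: "crown4_rel \<inter> crown4_carrier \<times> crown4_carrier = crown4_rel"
    unfolding crown4_carrier_def crown4_rel_def by auto
  have "iso X r crown4_carrier crown4_rel \<longleftrightarrow>
    (\<exists>g. distinct (map g [0, 1, 2, 3]) \<and> X = g ` set [0, 1, 2, 3] \<and>
       r \<inter> X \<times> X = map_prod g g ` crown4_rel)"
    unfolding iso_iff_rel_image rel unfolding carrier distinct_map by simp
  also have "\<dots> \<longleftrightarrow> (\<exists>p q s t. distinct [p, q, s, t] \<and> X = {p, q, s, t} \<and>
       r \<inter> X \<times> X = {(p, s), (p, t), (q, s), (q, t)})"
  proof
    assume "\<exists>p q s t. distinct [p, q, s, t] \<and> X = {p, q, s, t} \<and>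
       r \<inter> X \<times> X = {(p, s), (p, t), (q, s), (q, t)}"
    then obtain p q s t where "distinct [p, q, s, t]" "X = {p, q, s, t}"
      "r \<inter> X \<times> X = {(p, s), (p, t), (q, s), (q, t)}" by blast
    then show "\<exists>g. distinct (map g [0, 1, 2, 3]) \<and> X = g ` set [0, 1, 2, 3] \<and>
       r \<inter> X \<times> X = map_prod g g ` crown4_rel"
      by (intro exI[of _ "nth [p, q, s, t]"]) (simp add: crown4_rel_def)
  next
    assume "\<exists>g. distinct (map g [0, 1, 2, 3]) \<and> X = g ` set [0, 1, 2, 3] \<and>
       r \<inter> X \<times> X = map_prod g g ` crown4_rel"
    then obtain g where "distinct (map g [0, 1, 2, 3])" "X = g ` set [0, 1, 2, 3]"
       "r \<inter> X \<times> X = map_prod g g ` crown4_rel" by blast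
    then show "\<exists>p q s t. distinct [p, q, s, t] \<and> X = {p, q, s, t} \<and>
       r \<inter> X \<times> X = {(p, s), (p, t), (q, s), (q, t)}"
      by (intro exI[of _ "g 0"] exI[of _ "g 1"] exI[of _ "g 2"] exI[of _ "g 3"])
        (simp add: crown4_rel_def)
  qed
  finally show ?thesis .
qed

lemma iso_C3E:
  assumes "iso X r C3_carrier C3_rel"
  obtains a0 a1 b0 b1 c0 c1 where "distinct [a0, a1, b0, b1, c0, c1]"
    "X = {a0, a1, b0, b1, c0, c1}" "r \<inter> X \<times> X = {(a0, a1), (b0, b1), (c0, c1)}"
proof -
  have carrier: "C3_carrier = set [0, 1, 2, 3, 4, 5]"
    unfolding C3_carrier_def by auto
  have rel: "C3_rel \<inter> C3_carrier \<times> C3_carrier = C3_rel"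
    unfolding C3_carrier_def C3_rel_def by auto
  obtain g where inj: "inj_on g (set [0, 1, 2, 3, 4, 5])" and "X = g ` set [0, 1, 2, 3, 4, 5]"
    "r \<inter> X \<times> X = map_prod g g ` C3_rel"
    using assms unfolding iso_iff_rel_image rel unfolding carrier by blast
  moreover have "distinct (map g [0, 1, 2, 3, 4, 5])"
    unfolding distinct_map using inj by simp
  ultimately show ?thesis
    by (intro that[of "g 0" "g 1" "g 2" "g 3" "g 4" "g 5"]) (simp_all add: C3_rel_def)
qed

section \<open>Segments of posets in N_2\<close>

text \<open>
  Removing the bottom level of B and an up-set of B shifts the remaining levels down by one, so
  horizon 2 of B places level 0 of A below every level \<ge> 2 of A.
\<close>

lemma horizon2_imp_minset_below_rest_2:
  assumes B: "is_poset B s" and hor: "horizon2 B s" and iso: "iso A r (rest B s 1 - rest B s h) s"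
    and a: "a \<in> minset A r" and y: "y \<in> rest A r 2"
  shows "(a, y) \<in> r"
proof -
  let ?P = "rest B s 1" and ?D = "rest B s h"
  obtain f where f: "bij_betw f A (?P - ?D)"
    and rel: "\<And>x y. x \<in> A \<Longrightarrow> y \<in> A \<Longrightarrow> (x, y) \<in> r \<longleftrightarrow> (f x, f y) \<in> s"
    using iso unfolding iso_def by blast
  have up: "y \<in> ?D" if "x \<in> ?D" "y \<in> ?P" "(x, y) \<in> s" for x y
    using rest_up_closed[OF that(1) _ that(3)] rest_subset[of B s 1] that(2) by blast
  have "f ` minset A r = minset (?P - ?D) s"
    using minset_image[OF subset_refl rel] bij_betw_imp_surj_on[OF f] by simp
  then have "f a \<in> minset (?P - ?D) s"
    using a by blast
  then have "f a \<in> minset ?P s - ?D"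
    by (simp only: minset_Diff_up_closed[OF subset_refl up])
  then have fa: "f a \<in> level B s 1"
    by (simp add: level_def)
  have "f y \<in> rest (?P - ?D) s 2"
    using rest_image[OF f rel, of 2] y by blast
  then have "f y \<in> rest B s (1 + 2)"
    by (simp only: rest_Diff_up_closed[OF up] rest_rest[symmetric]) blast
  then obtain l where "1 + 2 \<le> l" "f y \<in> level B s l"
    using ex_level_if_mem_rest[OF B] by blast
  with hor fa have "(f a, f y) \<in> s"
    unfolding horizon2_def by blast
  moreover have "a \<in> A" "y \<in> A"
    using a y minset_subset[of A r] rest_subset[of A r 2] by blast+
  ultimately show "(a, y) \<in> r"
    using rel by blast
qed

lemma NSeg2D:
  assumes "NSeg2 A r"
  shows "is_poset A r" and "\<And>a y. a \<in> minset A r \<Longrightarrow> y \<in> rest A r 2 \<Longrightarrow> (a, y) \<in> r"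
proof -
  obtain B :: "nat set" and s where N2: "N2 B s" and iso: "iso A r (seg B s 1 (height B s - 1)) s"
    using assms unfolding NSeg2_def by blast
  have B: "is_poset B s"
    using N2 unfolding N2_def section3_def by blast
  have "Suc (height B s - 1) = height B s"
    using N2 unfolding N2_def by simp
  then have iso': "iso A r (rest B s 1 - rest B s (height B s)) s"
    using iso unfolding seg_eq_rest_Diff[OF B] by simp
  show "is_poset A r"
    using is_poset_if_iso[OF iso' is_poset_subset[OF B]] rest_subset[of B s 1] by blast
  show "(a, y) \<in> r" if "a \<in> minset A r" "y \<in> rest A r 2" for a y
    using horizon2_imp_minset_below_rest_2[OF B _ iso' that] N2 unfolding N2_def by blast
qed

section \<open>Retractions\<close>

definition retraction :: "'a set \<Rightarrow> 'a rel \<Rightarrow> ('a \<Rightarrow> 'a) \<Rightarrow> bool" where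
  "retraction A r f \<longleftrightarrow> (\<forall>x\<in>A. f x \<in> A) \<and> (\<forall>x\<in>A. f (f x) = f x) \<and>
     (\<forall>x\<in>A. \<forall>y\<in>A. (x, y) \<in> r \<longrightarrow> f x = f y \<or> (f x, f y) \<in> r)"

lemma is_retract_iff_retraction: "is_retract A r R \<longleftrightarrow> (\<exists>f. retraction A r f \<and> f ` A = R)"
  unfolding is_retract_def retraction_def by blast

lemma retractionD:
  assumes "retraction A r f" "x \<in> A"
  shows "f x \<in> A" "f (f x) = f x"
    and "y \<in> A \<Longrightarrow> (x, y) \<in> r \<Longrightarrow> f x = f y \<or> (f x, f y) \<in> r"
  using assms unfolding retraction_def by blast+

lemma retraction_restrict:
  assumes "retraction A r f" "B \<subseteq> A" "f ` B \<subseteq> B"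
  shows "retraction B r f"
  using assms unfolding retraction_def image_subset_iff by (meson subsetD)

lemma retraction_fixes_image:
  assumes "retraction A r f" "y \<in> f ` A"
  shows "f y = y"
  using assms(2) retractionD(2)[OF assms(1)] by auto

text \<open>
  If f x = m, then every minimal point of A is sent to m; one below m' would force m \<le> m'.
\<close>

lemma retraction_value_ne_minimal:
  assumes "is_poset A r" "retraction A r f"
    and "m \<in> minset (f ` A) r" "m' \<in> f ` A" "m \<noteq> m'" "(m, m') \<notin> r"
    and "x \<in> A" "\<And>a. a \<in> minset A r \<Longrightarrow> (a, x) \<in> r"
  shows "f x \<noteq> m"
proof
  assume fx: "f x = m"
  have m'A: "m' \<in> A" and fm': "f m' = m'"
    using assms(4) retractionD(1)[OF assms(2)] retraction_fixes_image[OF assms(2,4)] by auto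
  obtain a where a: "a \<in> minset A r" "a = m' \<or> (a, m') \<in> r"
    using minset_ex_below[OF assms(1) m'A] by blast
  have aA: "a \<in> A"
    using a(1) minset_subset[of A r] by blast
  have "f a = m \<or> (f a, m) \<in> r"
    using retractionD(3)[OF assms(2) aA assms(7) assms(8)[OF a(1)]] fx by simp
  moreover have "f a \<in> f ` A"
    using aA by blast
  ultimately have fa: "f a = m"
    using assms(3) unfolding minset_def by blast
  have "f a = f m' \<or> (f a, f m') \<in> r"
    using a(2) retractionD(3)[OF assms(2) aA m'A] by auto
  with fa fm' assms(5,6) show False
    by simp
qed

lemma retraction_glue:
  assumes c: "retraction S r c" and g: "retraction U r g" and "S \<inter> U = {}"
    and up: "\<And>x y. x \<in> U \<Longrightarrow> y \<in> S \<Longrightarrow> (x, y) \<notin> r"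
    and cross: "\<And>x y. x \<in> S \<Longrightarrow> y \<in> U \<Longrightarrow> (x, y) \<in> r \<Longrightarrow> (c x, g y) \<in> r"
  shows "retraction (S \<union> U) r (\<lambda>x. if x \<in> S then c x else g x)"
    (is "retraction _ r ?F")
proof -
  have F_S: "?F x = c x" "?F x \<in> S" if "x \<in> S" for x
    using that retractionD(1)[OF c] by auto
  have F_U: "?F x = g x" "?F x \<in> U" if "x \<in> U" for x
    using that retractionD(1)[OF g] \<open>S \<inter> U = {}\<close> by auto
  show ?thesis
    unfolding retraction_def
  proof (intro conjI ballI impI)
    fix x assume x: "x \<in> S \<union> U"
    show "?F x \<in> S \<union> U"
      using x F_S F_U by blast
    show "?F (?F x) = ?F x"
      using x F_S F_U retractionD(2)[OF c] retractionD(2)[OF g] \<open>S \<inter> U = {}\<close>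
      by (cases "x \<in> S") auto
    fix y assume y: "y \<in> S \<union> U" and xy: "(x, y) \<in> r"
    show "?F x = ?F y \<or> (?F x, ?F y) \<in> r"
    proof (cases "x \<in> S")
      case True
      then show ?thesis
        using y xy F_S F_U retractionD(3)[OF c] cross by (cases "y \<in> S") auto
    next
      case False
      then have "x \<in> U" "y \<in> U"
        using x y xy up by blast+
      then show ?thesis
        using xy F_U retractionD(3)[OF g] by simp
    qed
  qed
qed

lemma is_retract_Un_rest_2:
  assumes S: "is_retract (seg A r 0 1) r M" and M: "M \<subseteq> minset A r"
    and U: "is_retract (rest A r 2) r T"
    and below: "\<And>a y. a \<in> minset A r \<Longrightarrow> y \<in> rest A r 2 \<Longrightarrow> (a, y) \<in> r"
  shows "is_retract A r (M \<union> T)"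
proof -
  let ?S = "seg A r 0 1" and ?U = "rest A r 2"
  obtain c where c: "retraction ?S r c" "c ` ?S = M"
    using S unfolding is_retract_iff_retraction by blast
  obtain g where g: "retraction ?U r g" "g ` ?U = T"
    using U unfolding is_retract_iff_retraction by blast
  have SA: "?S \<subseteq> A"
    unfolding seg_0_1 using level_subset[of A r 0] level_subset[of A r 1] by blast
  then have disj: "?S \<inter> ?U = {}" and A: "?S \<union> ?U = A"
    unfolding rest_2_eq by blast+
  have up: "(x, y) \<notin> r" if "x \<in> ?U" "y \<in> ?S" for x y
    using rest_up_closed[OF that(1), of y] that(2) SA disj by blast
  have cross: "(c x, g y) \<in> r" if "x \<in> ?S" "y \<in> ?U" for x y
  proof -
    have "c x \<in> minset A r"
      using c(2) M that(1) by blast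
    then show ?thesis
      using below retractionD(1)[OF g(1) that(2)] by blast
  qed
  let ?F = "\<lambda>x. if x \<in> ?S then c x else g x"
  have "retraction (?S \<union> ?U) r ?F"
    using retraction_glue[OF c(1) g(1) disj up cross] .
  moreover have "?F ` (?S \<union> ?U) = M \<union> T"
    unfolding image_Un using disj c(2) g(2) by (auto simp: image_iff)
  ultimately show ?thesis
    unfolding is_retract_iff_retraction A by blast
qed

section \<open>Retracts with a 4-crown at the bottom\<close>

lemma crown4_bottomE:
  assumes "iso (seg R r 0 1) r crown4_carrier crown4_rel"
  obtains p q s t where "distinct [p, q, s, t]" "minset R r = {p, q}" "level R r 1 = {s, t}"
    "{p, q} \<times> {s, t} \<subseteq> r" "(p, q) \<notin> r" "(q, p) \<notin> r" "(s, t) \<notin> r" "(t, s) \<notin> r"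
proof -
  obtain p q s t where d: "distinct [p, q, s, t]" and S: "seg R r 0 1 = {p, q, s, t}"
    and rel: "r \<inter> seg R r 0 1 \<times> seg R r 0 1 = {(p, s), (p, t), (q, s), (q, t)}"
    using assms unfolding iso_crown4_iff by blast
  have rel': "(x, y) \<in> r \<longleftrightarrow> (x, y) \<in> {(p, s), (p, t), (q, s), (q, t)}"
    if "x \<in> {p, q, s, t}" "y \<in> {p, q, s, t}" for x y
    using that unfolding S[symmetric] rel[symmetric] by blast
  have min: "minset R r = {p, q}"
    unfolding level_0[symmetric] level_0_eq_minimal_in_seg_0_1 S using rel' d by auto
  have lev: "level R r 1 = {s, t}"
    unfolding level_1_eq_nonminimal_in_seg_0_1 S using rel' d by auto
  have "{p, q} \<times> {s, t} \<subseteq> r" "(p, q) \<notin> r" "(q, p) \<notin> r" "(s, t) \<notin> r" "(t, s) \<notin> r"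
    using d by (auto simp: rel')
  then show ?thesis
    by (rule that[OF d min lev])
qed

lemma C3_bottom_lower_bound_unique:
  assumes "iso (seg A r 0 1) r C3_carrier C3_rel"
    and "x \<in> level A r 1" "a \<in> A" "b \<in> A" "(a, x) \<in> r" "(b, x) \<in> r"
  shows "a = b"
proof -
  obtain a0 a1 b0 b1 c0 c1 where d: "distinct [a0, a1, b0, b1, c0, c1]"
    and "seg A r 0 1 = {a0, a1, b0, b1, c0, c1}"
    and rel: "r \<inter> seg A r 0 1 \<times> seg A r 0 1 = {(a0, a1), (b0, b1), (c0, c1)}"
    by (rule iso_C3E[OF assms(1)])
  have "a \<in> seg A r 0 1" "b \<in> seg A r 0 1" "x \<in> seg A r 0 1"
    using level_1_below_in_level_0[OF assms(2)] assms(2-6) unfolding seg_0_1 by blast+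
  then have "(a, x) \<in> {(a0, a1), (b0, b1), (c0, c1)}" "(b, x) \<in> {(a0, a1), (b0, b1), (c0, c1)}"
    using assms(5,6) unfolding rel[symmetric] by blast+
  with d show ?thesis
    by auto
qed

lemma C3_bottom_retract:
  assumes "iso (seg A r 0 1) r C3_carrier C3_rel"
  shows "\<exists>\<alpha> \<beta>. \<alpha> \<in> minset A r \<and> \<beta> \<in> minset A r \<and> \<alpha> \<noteq> \<beta> \<and> is_retract (seg A r 0 1) r {\<alpha>, \<beta>}"
proof -
  let ?S = "seg A r 0 1"
  obtain a0 a1 b0 b1 c0 c1 where d: "distinct [a0, a1, b0, b1, c0, c1]"
    and S: "?S = {a0, a1, b0, b1, c0, c1}" and rel: "r \<inter> ?S \<times> ?S = {(a0, a1), (b0, b1), (c0, c1)}"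
    by (rule iso_C3E[OF assms])
  have rel': "(x, y) \<in> r \<longleftrightarrow> (x, y) \<in> {(a0, a1), (b0, b1), (c0, c1)}"
    if "x \<in> {a0, a1, b0, b1, c0, c1}" "y \<in> {a0, a1, b0, b1, c0, c1}" for x y
    using that unfolding S[symmetric] rel[symmetric] by blast
  have "a0 \<in> level A r 0" "b0 \<in> level A r 0"
    unfolding level_0_eq_minimal_in_seg_0_1 S using rel' d by auto
  moreover define c where "c x = (if x \<in> {b0, b1} then b0 else a0)" for x
  have "retraction ?S r c"
    unfolding retraction_def S using rel' d by (auto simp: c_def)
  moreover have "c ` ?S = {a0, b0}"
    unfolding S c_def using d by auto
  ultimately show ?thesis
    using d unfolding level_0 is_retract_iff_retraction by auto
qed

lemma mem_rest_2_if_two_lower_bounds: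
  assumes unique: "\<And>x a b. x \<in> level A r 1 \<Longrightarrow> a \<in> A \<Longrightarrow> b \<in> A \<Longrightarrow> (a, x) \<in> r \<Longrightarrow> (b, x) \<in> r \<Longrightarrow> a = b"
    and "x \<in> A" "p \<in> A" "q \<in> A" "p \<noteq> q" "(p, x) \<in> r" "(q, x) \<in> r"
  shows "x \<in> rest A r 2"
proof -
  have "x \<notin> level A r 0"
    using assms(3,6) unfolding level_0 minset_def by blast
  moreover have "x \<notin> level A r 1"
    using unique[of x p q] assms(3-7) by blast
  ultimately show ?thesis
    using assms(2) unfolding rest_2_eq seg_0_1 by blast
qed

lemma retraction_image_above_level_1:
  assumes poset: "is_poset A r" and f: "retraction A r f"
    and x: "x \<in> A" and above: "\<And>a. a \<in> minset A r \<Longrightarrow> (a, x) \<in> r"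
    and min: "minset (f ` A) r = {p, q}" and "p \<noteq> q" "(p, q) \<notin> r" "(q, p) \<notin> r"
  shows "\<exists>n\<in>level (f ` A) r 1. n = f x \<or> (n, f x) \<in> r"
proof -
  have pq: "p \<in> minset (f ` A) r" "q \<in> minset (f ` A) r" "p \<in> f ` A" "q \<in> f ` A"
    using min minset_subset[of "f ` A" r] by auto
  have "f x \<noteq> p"
    by (rule retraction_value_ne_minimal[OF poset f pq(1) pq(4) assms(6,7) x above])
  moreover have "f x \<noteq> q"
    by (rule retraction_value_ne_minimal[OF poset f pq(2) pq(3) assms(6)[symmetric] assms(8) x above])
  ultimately have "f x \<in> f ` A - minset (f ` A) r"
    using x min by simp
  moreover have "f ` A \<subseteq> A"
    using retractionD(1)[OF f] by blast
  then have "is_poset (f ` A - minset (f ` A) r) r"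
    using is_poset_subset[OF poset, of "f ` A - minset (f ` A) r"] by blast
  ultimately obtain n where "n \<in> minset (f ` A - minset (f ` A) r) r" "n = f x \<or> (n, f x) \<in> r"
    using minset_ex_below[of "f ` A - minset (f ` A) r" r "f x"] by blast
  then show ?thesis
    unfolding level_def by auto
qed

lemma rest_2_retract_if_crown_retract:
  assumes poset: "is_poset A r"
    and below: "\<And>a y. a \<in> minset A r \<Longrightarrow> y \<in> rest A r 2 \<Longrightarrow> (a, y) \<in> r"
    and unique: "\<And>x a b. x \<in> level A r 1 \<Longrightarrow> a \<in> A \<Longrightarrow> b \<in> A \<Longrightarrow> (a, x) \<in> r \<Longrightarrow> (b, x) \<in> r \<Longrightarrow> a = b"
    and R: "is_retract A r R" and crown: "iso (seg R r 0 1) r crown4_carrier crown4_rel"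
  shows "\<exists>T. is_retract (rest A r 2) r T \<and> card (level T r 0) = 2 \<and>
           (\<forall>x\<in>level T r 0. \<forall>y\<in>level T r 0. (x, y) \<notin> r)"
proof -
  let ?U = "rest A r 2"
  obtain f where f: "retraction A r f" and fA: "f ` A = R"
    using R unfolding is_retract_iff_retraction by blast
  obtain p q s t where d: "distinct [p, q, s, t]" and minR: "minset R r = {p, q}"
    and lev1R: "level R r 1 = {s, t}" and crown_rel: "{p, q} \<times> {s, t} \<subseteq> r"
    and nr: "(p, q) \<notin> r" "(q, p) \<notin> r" "(s, t) \<notin> r" "(t, s) \<notin> r"
    by (rule crown4_bottomE[OF crown])
  have pqst_R: "p \<in> R" "q \<in> R" "s \<in> R" "t \<in> R"
    using minR lev1R minset_subset[of R r] level_subset[of R r 1] by blast+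
  then have pqst_A: "p \<in> A" "q \<in> A" "s \<in> A" "t \<in> A"
    using fA retractionD(1)[OF f] by blast+
  have st_U: "s \<in> ?U" "t \<in> ?U"
    using mem_rest_2_if_two_lower_bounds[OF unique] pqst_A crown_rel d by auto
  have above: "\<exists>n\<in>{s, t}. n = f x \<or> (n, f x) \<in> r" if "x \<in> ?U" for x
    using retraction_image_above_level_1[OF poset f _ below[OF _ that]] that rest_subset[of A r 2]
      minR lev1R fA nr d by auto
  have f_U: "f x \<in> ?U" if "x \<in> ?U" for x
    using above[OF that] st_U rest_up_closed[OF _ retractionD(1)[OF f]] that rest_subset[of A r 2]
    by blast
  have "retraction ?U r f"
    using retraction_restrict[OF f rest_subset[of A r 2]] f_U by blast
  then have "is_retract ?U r (f ` ?U)"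
    unfolding is_retract_iff_retraction by blast
  moreover have "minset (f ` ?U) r = {s, t}"
  proof (rule minset_eq_if_antichain_below[OF poset])
    show "f ` ?U \<subseteq> A"
      using f_U rest_subset[of A r 2] by blast
    have "f s = s" "f t = t"
      using retraction_fixes_image[OF f] fA pqst_R by blast+
    then show "{s, t} \<subseteq> f ` ?U"
      using st_U by (metis empty_subsetI image_eqI insert_subset)
    show "\<forall>x\<in>{s, t}. \<forall>y\<in>{s, t}. (x, y) \<notin> r"
      using nr is_posetD(2)[OF poset] pqst_A by blast
    show "\<exists>m\<in>{s, t}. m = y \<or> (m, y) \<in> r" if "y \<in> f ` ?U" for y
      using that above by blast
  qed
  moreover have "card {s, t} = 2"
    using d by simp
  ultimately show ?thesis
    using nr is_posetD(2)[OF poset] pqst_A unfolding level_0 by (metis insert_iff singletonD)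
qed

lemma levels_Un_above_minimal:
  assumes M: "M \<subseteq> minset A r" "m \<in> M" and T: "T \<subseteq> A" "M \<inter> T = {}"
    and above: "\<And>m y. m \<in> M \<Longrightarrow> y \<in> T \<Longrightarrow> (m, y) \<in> r"
  shows "level (M \<union> T) r 0 = M" and "level (M \<union> T) r 1 = level T r 0"
proof -
  have "M \<union> T \<subseteq> A"
    using M(1) T(1) minset_subset[of A r] by blast
  then have min: "minset (M \<union> T) r = M"
    using M above unfolding minset_def by blast
  then show "level (M \<union> T) r 0 = M"
    by (simp add: level_0)
  have "M \<union> T - M = T"
    using T(2) by blast
  with min show "level (M \<union> T) r 1 = level T r 0"
    by (simp add: level_def)
qed

lemma crown_retract_if_rest_2_retract:
  assumes below: "\<And>a y. a \<in> minset A r \<Longrightarrow> y \<in> rest A r 2 \<Longrightarrow> (a, y) \<in> r"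
    and \<alpha>: "\<alpha> \<in> minset A r" and \<beta>: "\<beta> \<in> minset A r" and "\<alpha> \<noteq> \<beta>"
    and bottom: "is_retract (seg A r 0 1) r {\<alpha>, \<beta>}"
    and T: "is_retract (rest A r 2) r T" "card (level T r 0) = 2"
    and antichain: "\<forall>x\<in>level T r 0. \<forall>y\<in>level T r 0. (x, y) \<notin> r"
  shows "\<exists>R. is_retract A r R \<and> iso (seg R r 0 1) r crown4_carrier crown4_rel"
proof -
  let ?U = "rest A r 2" and ?R = "{\<alpha>, \<beta>} \<union> T"
  obtain u v where uv: "level T r 0 = {u, v}" "u \<noteq> v"
    using T(2) unfolding card_2_iff by blast
  obtain g where "retraction ?U r g" "g ` ?U = T"
    using T(1) unfolding is_retract_iff_retraction by blast
  then have TU: "T \<subseteq> ?U"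
    using retractionD(1)[of ?U r g] by blast
  have ab_min: "\<And>x. x \<in> A \<Longrightarrow> (x, \<alpha>) \<notin> r \<and> (x, \<beta>) \<notin> r"
    using \<alpha> \<beta> unfolding minset_def by blast
  have ab_T: "{\<alpha>, \<beta>} \<inter> T = {}"
    using \<alpha> \<beta> TU unfolding rest_2_eq seg_0_1 level_0 by blast
  have TA: "T \<subseteq> A"
    using TU rest_subset[of A r 2] by blast
  have above_ab: "(\<alpha>, x) \<in> r" "(\<beta>, x) \<in> r" if "x \<in> T" for x
    using below[OF \<alpha>] below[OF \<beta>] that TU by blast+
  have levels: "level ?R r 0 = {\<alpha>, \<beta>}" "level ?R r 1 = {u, v}"
    using levels_Un_above_minimal[of "{\<alpha>, \<beta>}" A r \<alpha> T] \<alpha> \<beta> TA ab_T above_ab uv(1) by auto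
  have uv_T: "u \<in> T" "v \<in> T" and uv_min: "\<And>x. x \<in> T \<Longrightarrow> (x, u) \<notin> r \<and> (x, v) \<notin> r"
    using uv(1) unfolding level_0 minset_def by blast+
  have dist: "distinct [\<alpha>, \<beta>, u, v]"
    using \<open>\<alpha> \<noteq> \<beta>\<close> uv(2) uv_T ab_T by auto
  have rel: "r \<inter> {\<alpha>, \<beta>, u, v} \<times> {\<alpha>, \<beta>, u, v} = {(\<alpha>, u), (\<alpha>, v), (\<beta>, u), (\<beta>, v)}"
    using ab_min[of \<alpha>] ab_min[of \<beta>] ab_min[of u] ab_min[of v] uv_min[of u] uv_min[of v]
      above_ab[of u] above_ab[of v] antichain uv uv_T TA \<alpha> \<beta> minset_subset[of A r] by auto
  have "seg ?R r 0 1 = {\<alpha>, \<beta>, u, v}"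
    unfolding seg_0_1 levels by auto
  then have "iso (seg ?R r 0 1) r crown4_carrier crown4_rel"
    unfolding iso_crown4_iff
    by (intro exI[of _ \<alpha>] exI[of _ \<beta>] exI[of _ u] exI[of _ v]) (use dist rel in simp)
  moreover have "is_retract A r ?R"
    using is_retract_Un_rest_2[OF bottom _ T(1) below] \<alpha> \<beta> by blast
  ultimately show ?thesis
    by blast
qed

lemma crown_retract_iff_rest_2_retract:
  assumes poset: "is_poset A r"
    and below: "\<And>a y. a \<in> minset A r \<Longrightarrow> y \<in> rest A r 2 \<Longrightarrow> (a, y) \<in> r"
    and unique: "\<And>x a b. x \<in> level A r 1 \<Longrightarrow> a \<in> A \<Longrightarrow> b \<in> A \<Longrightarrow> (a, x) \<in> r \<Longrightarrow> (b, x) \<in> r \<Longrightarrow> a = b"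
    and bottom: "\<alpha> \<in> minset A r" "\<beta> \<in> minset A r" "\<alpha> \<noteq> \<beta>" "is_retract (seg A r 0 1) r {\<alpha>, \<beta>}"
  shows "(\<exists>R. is_retract A r R \<and> iso (seg R r 0 1) r crown4_carrier crown4_rel) \<longleftrightarrow>
    (\<exists>T. is_retract (rest A r 2) r T \<and> card (level T r 0) = 2 \<and>
       (\<forall>x\<in>level T r 0. \<forall>y\<in>level T r 0. (x, y) \<notin> r))"
proof (intro iffI; elim exE conjE)
  fix R assume "is_retract A r R" "iso (seg R r 0 1) r crown4_carrier crown4_rel"
  with poset below unique show "\<exists>T. is_retract (rest A r 2) r T \<and> card (level T r 0) = 2 \<and>
      (\<forall>x\<in>level T r 0. \<forall>y\<in>level T r 0. (x, y) \<notin> r)"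
    by (rule rest_2_retract_if_crown_retract)
next
  fix T assume "is_retract (rest A r 2) r T" "card (level T r 0) = 2"
    "\<forall>x\<in>level T r 0. \<forall>y\<in>level T r 0. (x, y) \<notin> r"
  with below bottom show "\<exists>R. is_retract A r R \<and> iso (seg R r 0 1) r crown4_carrier crown4_rel"
    by (rule crown_retract_if_rest_2_retract)
qed

theorem corollary4p6:
  fixes A :: "'a set" and r :: "'a rel"
  assumes "NSeg2 A r"
    and "height A r \<ge> 2"
    and "iso (seg A r 0 1) r C3_carrier C3_rel"
  shows "(\<exists>R. is_retract A r R \<and> iso (seg R r 0 1) r crown4_carrier crown4_rel)
     \<longleftrightarrow> (\<exists>T. is_retract (seg A r 2 (height A r)) r T \<and>
            card (level T r 0) = 2 \<and>
            (\<forall>x\<in>level T r 0. \<forall>y\<in>level T r 0. (x, y) \<notin> r))"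
proof -
  have poset: "is_poset A r"
    by (rule NSeg2D(1)[OF assms(1)])
  have below: "\<And>a y. a \<in> minset A r \<Longrightarrow> y \<in> rest A r 2 \<Longrightarrow> (a, y) \<in> r"
    by (rule NSeg2D(2)[OF assms(1)])
  have unique: "\<And>x a b. x \<in> level A r 1 \<Longrightarrow> a \<in> A \<Longrightarrow> b \<in> A \<Longrightarrow> (a, x) \<in> r \<Longrightarrow> (b, x) \<in> r \<Longrightarrow> a = b"
    by (rule C3_bottom_lower_bound_unique[OF assms(3)])
  obtain \<alpha> \<beta> where "\<alpha> \<in> minset A r" "\<beta> \<in> minset A r" "\<alpha> \<noteq> \<beta>"
    "is_retract (seg A r 0 1) r {\<alpha>, \<beta>}"
    using C3_bottom_retract[OF assms(3)] by blast
  with poset below unique show ?thesis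
    unfolding seg_height_eq_rest[OF poset] by (rule crown_retract_iff_rest_2_retract)
qed

end
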